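(* Let $F_2=\langle x,y\rangle$ be the free group of rank $2$, and for $i=1,2,\ldots$ let $$a_i(x,y)=y^{(x y^i)^{2} x^{-1}}\, y^{-x}\in F_2 .$$ Let $\bar F=\langle a_i(x,y)\mid i=1,2,\ldots\rangle\le F_2$. For any subgroup $N$ of $\bar F$, let $\bar N$ be the normal closure of $N$ in $\bar F$ and $\tilde N$ the normal closure of $N$ in $F_2$. Then $\bar F\cap\tilde N=\bar N$.
   Context: Notation: $u^v=v^{-1}uv$ and $u^{-v}=(u^{-1})^v$. *)

theory Defs
  imports "HOL-Algebra.Algebra"
begin

text \<open>The free group of rank 2, realised as reduced words over the letters
  x, y and their inverses; a letter is a pair (generator, inverted?).\<close>

datatype gen = GX | GY

type_synonym letter = "gen \<times> bool"

definition cancels :: "letter \<Rightarrow> letter \<Rightarrow> bool" where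
  "cancels a b \<longleftrightarrow> fst a = fst b \<and> snd a \<noteq> snd b"

fun reduced :: "letter list \<Rightarrow> bool" where
  "reduced [] = True"
| "reduced [a] = True"
| "reduced (a # b # w) = (\<not> cancels a b \<and> reduced (b # w))"

fun push :: "letter \<Rightarrow> letter list \<Rightarrow> letter list" where
  "push a [] = [a]"
| "push a (b # w) = (if cancels a b then w else a # b # w)"

definition reduce :: "letter list \<Rightarrow> letter list" where
  "reduce w = foldr push w []"

definition F2 :: "letter list monoid" where
  "F2 = \<lparr> carrier = {w. reduced w}, monoid.mult = (\<lambda>u v. reduce (u @ v)), one = [] \<rparr>"

definition gx :: "letter list" where "gx = [(GX, False)]"
definition gy :: "letter list" where "gy = [(GY, False)]"

definition conjg :: "('a, 'b) monoid_scheme \<Rightarrow> 'a \<Rightarrow> 'a \<Rightarrow> 'a" where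
  "conjg G u v = inv\<^bsub>G\<^esub> v \<otimes>\<^bsub>G\<^esub> u \<otimes>\<^bsub>G\<^esub> v"

definition a_word :: "nat \<Rightarrow> letter list" where
  "a_word i = conjg F2 gy (((gx \<otimes>\<^bsub>F2\<^esub> (gy [^]\<^bsub>F2\<^esub> i)) [^]\<^bsub>F2\<^esub> (2::nat)) \<otimes>\<^bsub>F2\<^esub> inv\<^bsub>F2\<^esub> gx)
     \<otimes>\<^bsub>F2\<^esub> conjg F2 (inv\<^bsub>F2\<^esub> gy) gx"

definition Fbar :: "letter list set" where
  "Fbar = generate F2 {a_word i | i. i \<ge> 1}"

definition normal_closure :: "('a, 'b) monoid_scheme \<Rightarrow> 'a set \<Rightarrow> 'a set" where
  "normal_closure G S = generate G {conjg G s g | s g. s \<in> S \<and> g \<in> carrier G}"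

end

theory Submission
  imports Defs
begin

(* Let K be the normal closure of N in Fbar; clearly K lies in Fbar and in the normal closure
   of N in F2. For the converse, F2 is made to act on a set of points, each carrying a left
   coset gK (g in Fbar) together with some bookkeeping data, in such a way that every f in Fbar
   multiplies the coset by f at certain base points and fixes all other points; for the
   generators a_i this is a finite computation. An element n of N then fixes every point, since
   n g K = g (g^-1 n g) K = g K, so the whole normal closure of N in F2 acts trivially. An
   element z of Fbar in that normal closure therefore fixes the base point with coset K, which
   means z K = K, i.e. z in K. *)

section \<open>Free reduction\<close>

(* Generic in the alphabet: used both for F2, where push, reduced and reduce of Defs are the
   instances for the alphabet gen, and for the auxiliary free group on letters t_0, t_1, ... *)

definition inv_letter :: "'a \<times> bool \<Rightarrow> 'a \<times> bool" where
  "inv_letter a = (fst a, \<not> snd a)"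

fun push_letter :: "'a \<times> bool \<Rightarrow> ('a \<times> bool) list \<Rightarrow> ('a \<times> bool) list" where
  "push_letter a [] = [a]"
| "push_letter a (b # w) = (if b = inv_letter a then w else a # b # w)"

fun reduced_word :: "('a \<times> bool) list \<Rightarrow> bool" where
  "reduced_word [] = True"
| "reduced_word [a] = True"
| "reduced_word (a # b # w) = (b \<noteq> inv_letter a \<and> reduced_word (b # w))"

definition reduce_word :: "('a \<times> bool) list \<Rightarrow> ('a \<times> bool) list" where
  "reduce_word w = foldr push_letter w []"

definition inv_word :: "('a \<times> bool) list \<Rightarrow> ('a \<times> bool) list" where
  "inv_word w = rev (map inv_letter w)"

lemma inv_letter_inv_letter [simp]: "inv_letter (inv_letter a) = a"
  by (simp add: inv_letter_def)

lemma inv_word_Nil [simp]: "inv_word [] = []"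
  and inv_word_Cons [simp]: "inv_word (a # w) = inv_word w @ [inv_letter a]"
  and inv_word_append [simp]: "inv_word (u @ v) = inv_word v @ inv_word u"
  and inv_word_replicate [simp]: "inv_word (replicate n a) = replicate n (inv_letter a)"
  by (simp_all add: inv_word_def)

lemma reduced_word_ConsD: "reduced_word (a # w) \<Longrightarrow> reduced_word w"
  by (cases w) auto

lemma reduced_word_push_letter: "reduced_word w \<Longrightarrow> reduced_word (push_letter a w)"
  by (cases w) (auto dest: reduced_word_ConsD)

lemma push_letter_cancel: "reduced_word w \<Longrightarrow> push_letter a (push_letter (inv_letter a) w) = w"
  by (cases w rule: reduced_word.cases) auto

lemma reduced_word_foldr_push_letter:
  "reduced_word w \<Longrightarrow> reduced_word (foldr push_letter u w)"
  by (induction u) (auto intro: reduced_word_push_letter)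

lemma reduced_word_reduce_word [simp]: "reduced_word (reduce_word w)"
  by (simp add: reduce_word_def reduced_word_foldr_push_letter)

lemma reduce_word_reduced: "reduced_word w \<Longrightarrow> reduce_word w = w"
  by (induction w rule: reduced_word.induct) (auto simp: reduce_word_def)

lemma reduce_word_Nil [simp]: "reduce_word [] = []"
  by (simp add: reduce_word_def)

lemma reduce_word_append: "reduce_word (u @ v) = foldr push_letter u (reduce_word v)"
  by (simp add: reduce_word_def)

lemma foldr_push_letter_push_letter:
  assumes "reduced_word r" "reduced_word z"
  shows "foldr push_letter (push_letter a r) z = push_letter a (foldr push_letter r z)"
proof (cases r)
  case (Cons b r')
  have "reduced_word (foldr push_letter r' z)"
    using assms(2) by (rule reduced_word_foldr_push_letter)
  then show ?thesis
    using Cons push_letter_cancel[of "foldr push_letter r' z" a] by auto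
qed simp

lemma foldr_push_letter_reduce_word:
  "reduced_word z \<Longrightarrow> foldr push_letter (reduce_word u) z = foldr push_letter u z"
  by (induction u) (simp_all add: reduce_word_def foldr_push_letter_push_letter
      reduced_word_foldr_push_letter)

lemma reduce_word_reduce_word_left [simp]:
  "reduce_word (reduce_word u @ v) = reduce_word (u @ v)"
  by (simp add: reduce_word_append foldr_push_letter_reduce_word)

lemma reduce_word_reduce_word_right [simp]:
  "reduce_word (u @ reduce_word v) = reduce_word (u @ v)"
  by (simp add: reduce_word_append reduce_word_reduced)

lemma reduce_word_reduce_word_Cons [simp]:
  "reduce_word (a # reduce_word v) = reduce_word (a # v)"
  using reduce_word_reduce_word_right[of "[a]"] by simp

lemma foldr_push_letter_inv_word:
  "reduced_word w \<Longrightarrow> foldr push_letter (inv_word u) (foldr push_letter u w) = w"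
  by (induction u) (simp_all add: push_letter_cancel[of _ "inv_letter _", simplified]
      reduced_word_foldr_push_letter)

lemma reduce_word_inv_word_cancel [simp]: "reduce_word (inv_word u @ u @ v) = reduce_word v"
  by (simp add: reduce_word_append foldr_push_letter_inv_word)

lemma reduce_word_inv_word_cancel' [simp]: "reduce_word (u @ inv_word u @ v) = reduce_word v"
  using reduce_word_inv_word_cancel[of "inv_word u"]
  by (simp add: inv_word_def rev_map comp_def inv_letter_def)

lemma cancels_iff_inv_letter: "cancels a b \<longleftrightarrow> b = inv_letter a"
  by (cases a; cases b) (auto simp: cancels_def inv_letter_def)

lemma push_eq_push_letter: "push = push_letter"
proof (intro ext)
  show "push a w = push_letter a w" for a w
    by (cases w) (simp_all add: cancels_iff_inv_letter)
qed

lemma reduced_eq_reduced_word: "reduced = reduced_word"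
proof
  show "reduced w = reduced_word w" for w
    by (induction w rule: reduced.induct) (simp_all add: cancels_iff_inv_letter)
qed

lemma reduce_eq_reduce_word: "reduce = reduce_word"
  by (simp add: fun_eq_iff reduce_def reduce_word_def push_eq_push_letter)

lemma F2_carrier: "carrier F2 = {w. reduced_word w}"
  and F2_mult: "u \<otimes>\<^bsub>F2\<^esub> v = reduce_word (u @ v)"
  and F2_one: "\<one>\<^bsub>F2\<^esub> = []"
  by (simp_all add: F2_def reduced_eq_reduced_word reduce_eq_reduce_word)

lemmas F2_simps = F2_carrier F2_mult F2_one

lemma group_F2: "group F2"
proof (rule groupI)
  fix x y z :: "letter list"
  show "(x \<otimes>\<^bsub>F2\<^esub> y) \<otimes>\<^bsub>F2\<^esub> z = x \<otimes>\<^bsub>F2\<^esub> (y \<otimes>\<^bsub>F2\<^esub> z)"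
    using reduce_word_reduce_word_right[of x "y @ z"] by (simp add: F2_simps)
  assume "x \<in> carrier F2"
  then show "\<one>\<^bsub>F2\<^esub> \<otimes>\<^bsub>F2\<^esub> x = x"
    by (simp add: F2_simps reduce_word_reduced)
  show "\<exists>y \<in> carrier F2. y \<otimes>\<^bsub>F2\<^esub> x = \<one>\<^bsub>F2\<^esub>"
    using reduce_word_inv_word_cancel[of x "[]"]
    by (intro bexI[of _ "reduce_word (inv_word x)"]) (auto simp: F2_simps)
qed (auto simp: F2_simps)

interpretation F2: group F2
  by (rule group_F2)

lemma F2_inv: "inv\<^bsub>F2\<^esub> (reduce_word w) = reduce_word (inv_word w)"
  using reduce_word_inv_word_cancel[of w "[]"] by (intro F2.inv_equality) (auto simp: F2_simps)

lemma F2_inv_reduced: "reduced_word w \<Longrightarrow> inv\<^bsub>F2\<^esub> w = reduce_word (inv_word w)"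
  using F2_inv[of w] by (simp add: reduce_word_reduced)

lemma F2_pow: "reduce_word w [^]\<^bsub>F2\<^esub> (n::nat) = reduce_word (concat (replicate n w))"
proof (induction n)
  case (Suc n)
  then show ?case
    using F2.nat_pow_Suc2[of "reduce_word w" n] by (simp add: F2_simps)
qed (simp add: F2_one)

definition a_conjugator :: "nat \<Rightarrow> letter list" where
  "a_conjugator i =
     (GX, False) # replicate i (GY, False) @ (GX, False) # replicate i (GY, False) @ [(GX, True)]"

definition a_letters :: "nat \<Rightarrow> letter list" where
  "a_letters i = inv_word (a_conjugator i) @ (GY, False) # a_conjugator i
     @ [(GX, True), (GY, True), (GX, False)]"

lemma a_word_eq_reduce_word: "a_word i = reduce_word (a_letters i)"
proof -
  have gx: "gx = reduce_word [(GX, False)]" and gy: "gy = reduce_word [(GY, False)]"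
    by (simp_all add: gx_def gy_def reduce_word_def)
  show ?thesis
    unfolding a_word_def conjg_def gx gy
    by (simp add: F2_simps F2_pow F2_inv numeral_2_eq_2 a_letters_def a_conjugator_def inv_letter_def)
qed

lemma a_word_0: "a_word 0 = []"
  by (simp add: a_word_eq_reduce_word a_letters_def a_conjugator_def reduce_word_def inv_letter_def)

lemma subgroup_Fbar: "subgroup Fbar F2"
  unfolding Fbar_def
  by (rule F2.generate_is_subgroup) (auto simp: a_word_eq_reduce_word F2_carrier)

lemma a_word_in_Fbar: "a_word i \<in> Fbar"
proof (cases "i = 0")
  case True
  then show ?thesis
    using subgroup.one_closed[OF subgroup_Fbar] by (simp add: a_word_0 F2_one)
next
  case False
  then show ?thesis
    unfolding Fbar_def by (intro generate.incl) auto
qed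

lemma Fbar_subset_carrier: "Fbar \<subseteq> carrier F2"
  using subgroup.subset[OF subgroup_Fbar] .

section \<open>Normal closures\<close>

lemma (in group) normal_closure_subset:
  assumes "subgroup H G" and "\<And>s g. s \<in> S \<Longrightarrow> g \<in> carrier G \<Longrightarrow> conjg G s g \<in> H"
  shows "normal_closure G S \<subseteq> H"
  unfolding normal_closure_def using assms by (intro generate_subgroup_incl) auto

lemma (in group) conjugates_in_subgroup:
  assumes "subgroup H G" and "S \<subseteq> H"
  shows "{conjg G s g | s g. s \<in> S \<and> g \<in> H} \<subseteq> H"
  using assms subgroup.mem_carrier[OF assms(1)]
  by (auto simp: conjg_def subgroup.m_closed subgroup.m_inv_closed)

lemma (in group) normal_closure_in_subgroup:
  assumes "subgroup H G" and "S \<subseteq> H"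
  shows "normal_closure (G\<lparr>carrier := H\<rparr>) S = generate G {conjg G s g | s g. s \<in> S \<and> g \<in> H}"
proof -
  have "conjg (G\<lparr>carrier := H\<rparr>) s g = conjg G s g" if "g \<in> H" for s g
    using m_inv_consistent[OF assms(1) that] by (simp add: conjg_def)
  then have "{conjg (G\<lparr>carrier := H\<rparr>) s g | s g. s \<in> S \<and> g \<in> carrier (G\<lparr>carrier := H\<rparr>)}
      = {conjg G s g | s g. s \<in> S \<and> g \<in> H}"
    by (simp; intro Collect_cong) (metis (no_types, lifting))
  then have "normal_closure (G\<lparr>carrier := H\<rparr>) S
      = generate (G\<lparr>carrier := H\<rparr>) {conjg G s g | s g. s \<in> S \<and> g \<in> H}"
    by (simp only: normal_closure_def)
  also have "\<dots> = generate G {conjg G s g | s g. s \<in> S \<and> g \<in> H}"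
    by (rule generate_consistent[OF conjugates_in_subgroup[OF assms] assms(1)])
  finally show ?thesis .
qed

lemma (in group) subgroup_normal_closure_in_subgroup:
  assumes "subgroup H G" and "S \<subseteq> H"
  shows "subgroup (normal_closure (G\<lparr>carrier := H\<rparr>) S) G"
  unfolding normal_closure_in_subgroup[OF assms]
  using conjugates_in_subgroup[OF assms] subgroup.subset[OF assms(1)]
  by (intro generate_is_subgroup) blast

lemma (in group) conjg_in_normal_closure_in_subgroup:
  assumes "subgroup H G" and "S \<subseteq> H" and "s \<in> S" and "g \<in> H"
  shows "conjg G s g \<in> normal_closure (G\<lparr>carrier := H\<rparr>) S"
  unfolding normal_closure_in_subgroup[OF assms(1,2)] using assms(3,4) by (intro generate.incl) blast

lemma (in group) normal_closure_in_subgroup_subset: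
  assumes "subgroup H G" and "S \<subseteq> H"
  shows "normal_closure (G\<lparr>carrier := H\<rparr>) S \<subseteq> H \<inter> normal_closure G S"
proof -
  have "normal_closure (G\<lparr>carrier := H\<rparr>) S \<subseteq> H"
    unfolding normal_closure_in_subgroup[OF assms]
    using conjugates_in_subgroup[OF assms] assms(1) by (rule generate_subgroup_incl)
  moreover have "{conjg G s g | s g. s \<in> S \<and> g \<in> H} \<subseteq> {conjg G s g | s g. s \<in> S \<and> g \<in> carrier G}"
    using subgroup.subset[OF assms(1)] by blast
  then have "normal_closure (G\<lparr>carrier := H\<rparr>) S \<subseteq> normal_closure G S"
    unfolding normal_closure_in_subgroup[OF assms] by (simp add: normal_closure_def mono_generate)
  ultimately show ?thesis
    by blast
qed

section \<open>Actions of F2 given by the actions of the letters\<close>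

definition word_action :: "('l \<Rightarrow> 'p \<Rightarrow> 'p) \<Rightarrow> 'l list \<Rightarrow> 'p \<Rightarrow> 'p" where
  "word_action L w = foldr (\<lambda>a f. L a \<circ> f) w id"

lemma word_action_Nil [simp]: "word_action L [] = id"
  and word_action_Cons [simp]: "word_action L (a # w) = L a \<circ> word_action L w"
  by (simp_all add: word_action_def)

lemma word_action_append [simp]: "word_action L (u @ v) = word_action L u \<circ> word_action L v"
  by (induction u) auto

lemma word_action_replicate [simp]: "word_action L (replicate n a) = L a ^^ n"
  by (induction n) auto

locale F2_action =
  fixes L :: "letter \<Rightarrow> 'p \<Rightarrow> 'p" and D :: "'p set"
  assumes L_closed: "p \<in> D \<Longrightarrow> L a p \<in> D"
    and L_inv_letter: "p \<in> D \<Longrightarrow> L (inv_letter a) (L a p) = p"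
begin

definition action_kernel :: "letter list set" where
  "action_kernel = {w \<in> carrier F2. \<forall>p \<in> D. word_action L w p = p}"

lemma word_action_closed: "p \<in> D \<Longrightarrow> word_action L w p \<in> D"
  by (induction w) (auto intro: L_closed)

lemma word_action_push_letter:
  assumes "p \<in> D"
  shows "word_action L (push_letter a w) p = L a (word_action L w p)"
proof (cases w)
  case (Cons b w')
  then show ?thesis
    using L_inv_letter[OF word_action_closed[OF assms], of b w'] by auto
qed simp

lemma word_action_reduce_word: "p \<in> D \<Longrightarrow> word_action L (reduce_word w) p = word_action L w p"
  by (induction w) (simp_all add: reduce_word_def word_action_push_letter)

lemma word_action_mult:
  "p \<in> D \<Longrightarrow> word_action L (u \<otimes>\<^bsub>F2\<^esub> v) p = word_action L u (word_action L v p)"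
  by (simp add: F2_mult word_action_reduce_word)

lemma word_action_inv_word: "p \<in> D \<Longrightarrow> word_action L (inv_word w) (word_action L w p) = p"
  using word_action_reduce_word[of p "inv_word w @ w"] reduce_word_inv_word_cancel[of w "[]"]
  by simp

lemma word_action_F2_inv:
  "g \<in> carrier F2 \<Longrightarrow> p \<in> D \<Longrightarrow> word_action L (inv\<^bsub>F2\<^esub> g) (word_action L g p) = p"
  by (simp add: F2_carrier F2_inv_reduced word_action_reduce_word word_action_closed
      word_action_inv_word)

lemma subgroup_action_kernel: "subgroup action_kernel F2"
proof (rule F2.subgroupI)
  fix g h
  assume "g \<in> action_kernel" and "h \<in> action_kernel"
  then show "g \<otimes>\<^bsub>F2\<^esub> h \<in> action_kernel"
    by (simp add: action_kernel_def word_action_mult)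
next
  fix g
  assume g: "g \<in> action_kernel"
  then have "word_action L (inv\<^bsub>F2\<^esub> g) p = p" if "p \<in> D" for p
    using word_action_F2_inv[of g p] that by (simp add: action_kernel_def)
  then show "inv\<^bsub>F2\<^esub> g \<in> action_kernel"
    using g by (simp add: action_kernel_def)
qed (auto simp: action_kernel_def F2_simps intro: exI[of _ "[]"])

lemma normal_closure_subset_action_kernel:
  assumes "\<And>s p. s \<in> S \<Longrightarrow> p \<in> D \<Longrightarrow> word_action L s p = p"
  shows "normal_closure F2 S \<subseteq> action_kernel"
proof (rule F2.normal_closure_subset[OF subgroup_action_kernel])
  fix s g
  assume s: "s \<in> S" and g: "g \<in> carrier F2"
  have "word_action L (conjg F2 s g) p = p" if "p \<in> D" for p
    using s g that assms word_action_closed word_action_F2_inv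
    unfolding conjg_def by (simp only: word_action_mult)
  then show "conjg F2 s g \<in> action_kernel"
    by (simp add: action_kernel_def conjg_def F2_simps)
qed

end

section \<open>A permutation representation of F2\<close>

lemma funpow_left_inverse_on:
  assumes "\<And>x. x \<in> A \<Longrightarrow> f x \<in> A" and "\<And>x. x \<in> A \<Longrightarrow> g (f x) = x" and "x \<in> A"
  shows "(g ^^ n) ((f ^^ n) x) = x"
  using assms(3)
proof (induction n arbitrary: x)
  case (Suc n)
  have "(f ^^ Suc n) x = (f ^^ n) (f x)"
    by (simp add: funpow_swap1)
  then show ?case
    using Suc assms(1,2) by simp
qed simp

(* A point ((C, h, c), j) consists of a set of words C (a left coset gK with g in Fbar, in the
   locale Fbar_coset_action below), a reduced word h in the free group on letters t_0, t_1, ...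
   (t_k is encoded as (k, False)), a counter c and a level j. The generator x raises the level,
   and y acts according to the level: at levels -1 and 0 it lowers resp. raises the counter, at
   level 1 it lowers the counter while multiplying h on the left by t_(c-1) t_c^-1 (by t_1^-1
   when c = 1), and at level 2 it multiplies C on the left by the label of (h, c). *)

type_synonym register = "(nat \<times> bool) list \<times> int"
type_synonym state = "letter list set \<times> register"
type_synonym point = "state \<times> int"

definition step_word :: "int \<Rightarrow> (nat \<times> bool) list" where
  "step_word c = (if c = 1 then [(1, True)]
     else if c \<ge> 2 then [(nat c - 1, False), (nat c, True)] else [])"

fun reg_move :: "int \<Rightarrow> register \<Rightarrow> register" where
  "reg_move j (h, c) =
     (if j = -1 then (h, c - 1)
      else if j = 0 then (h, c + 1)
      else if j = 1 then (reduce_word (step_word c @ h), c - 1)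
      else (h, c))"

fun reg_move_inv :: "int \<Rightarrow> register \<Rightarrow> register" where
  "reg_move_inv j (h, c) =
     (if j = -1 then (h, c + 1)
      else if j = 0 then (h, c - 1)
      else if j = 1 then (reduce_word (inv_word (step_word (c + 1)) @ h), c + 1)
      else (h, c))"

definition label :: "register \<Rightarrow> letter list" where
  "label r = (if snd r = 0 \<and> fst r \<noteq> [] \<and> snd (last (fst r)) then a_word (fst (last (fst r))) else [])"

fun y_move :: "int \<Rightarrow> state \<Rightarrow> state" where
  "y_move j (C, r) = (if j = 2 then (label r <#\<^bsub>F2\<^esub> C, r) else (C, reg_move j r))"

fun y_move_inv :: "int \<Rightarrow> state \<Rightarrow> state" where
  "y_move_inv j (C, r) =
     (if j = 2 then (inv\<^bsub>F2\<^esub> (label r) <#\<^bsub>F2\<^esub> C, r) else (C, reg_move_inv j r))"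

fun act_letter :: "letter \<Rightarrow> point \<Rightarrow> point" where
  "act_letter (GX, False) (s, j) = (s, j + 1)"
| "act_letter (GX, True) (s, j) = (s, j - 1)"
| "act_letter (GY, False) (s, j) = (y_move j s, j)"
| "act_letter (GY, True) (s, j) = (y_move_inv j s, j)"

lemma reg_move_inv_reg_move: "reduced_word h \<Longrightarrow> reg_move_inv j (reg_move j (h, c)) = (h, c)"
  by (simp add: reduce_word_reduced)

lemma reg_move_reg_move_inv: "reduced_word h \<Longrightarrow> reg_move j (reg_move_inv j (h, c)) = (h, c)"
  using reduce_word_inv_word_cancel'[of "step_word (c + 1)" h] by (simp add: reduce_word_reduced)

lemma reduced_word_reg_move: "reduced_word h \<Longrightarrow> reduced_word (fst (reg_move j (h, c)))"
  by simp

lemma reg_move_other: "j \<notin> {-1, 0, 1} \<Longrightarrow> reg_move j = id"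
  and reg_move_inv_other: "j \<notin> {-1, 0, 1} \<Longrightarrow> reg_move_inv j = id"
  by (auto simp: fun_eq_iff)

lemma reg_move_counter_pow:
  "(reg_move (-1) ^^ n) (h, c) = (h, c - int n)"
  "(reg_move 0 ^^ n) (h, c) = (h, c + int n)"
  "(reg_move_inv (-1) ^^ n) (h, c) = (h, c + int n)"
  "(reg_move_inv 0 ^^ n) (h, c) = (h, c - int n)"
  by (induction n) simp_all

lemma snd_reg_move_1_pow: "snd ((reg_move 1 ^^ n) r) = snd r - int n"
proof (induction n)
  case (Suc n)
  then show ?case
    by (cases "(reg_move 1 ^^ n) r") simp
qed simp

lemma reg_move_1_pow_descent:
  "k \<ge> 1 \<Longrightarrow> reduced_word h \<Longrightarrow> (reg_move 1 ^^ k) (h, int k) = (reduce_word ((k, True) # h), 0)"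
proof (induction k arbitrary: h rule: nat_induct_at_least)
  case base
  then show ?case by (simp add: step_word_def)
next
  case (Suc k)
  have "(reg_move 1 ^^ Suc k) (h, int (Suc k)) = (reg_move 1 ^^ k) (reg_move 1 (h, int (Suc k)))"
    by (simp add: funpow_swap1)
  also have "reg_move 1 (h, int (Suc k)) = (reduce_word ((k, False) # (Suc k, True) # h), int k)"
    using Suc.hyps by (simp add: step_word_def nat_add_distrib)
  also have "(reg_move 1 ^^ k) \<dots> = (reduce_word ((k, True) # (k, False) # (Suc k, True) # h), 0)"
    using Suc by simp
  also have "reduce_word ((k, True) # (k, False) # (Suc k, True) # h) = reduce_word ((Suc k, True) # h)"
    using reduce_word_inv_word_cancel[of "[(k, False)]"] by (simp add: inv_letter_def)
  finally show ?case .
qed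

lemma reg_move_inv_1_pow_cancel:
  "reduced_word h \<Longrightarrow> (reg_move_inv 1 ^^ n) ((reg_move 1 ^^ n) (h, c)) = (h, c)"
  using funpow_left_inverse_on[of "{r. reduced_word (fst r)}" "reg_move 1" "reg_move_inv 1"]
  by (force simp del: reg_move.simps reg_move_inv.simps
      simp: reduced_word_reg_move reg_move_inv_reg_move)

lemma label_push_inv_letter:
  assumes "reduced_word h" and "h \<noteq> []"
  shows "label (reduce_word ((i, True) # h), 0) = label (h, 0)"
proof -
  have "reduce_word ((i, True) # h) = push_letter (i, True) h"
    using assms(1) by (simp add: reduce_word_reduced reduce_word_append[of "[_]", simplified])
  then show ?thesis
    using assms(2) by (cases h rule: remdups_adj.cases) (auto simp: inv_letter_def label_def)
qed

lemma label_descent: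
  assumes "i \<ge> 1" and "reduced_word h"
  shows "label ((reg_move 1 ^^ i) (h, c + int i)) = (if h = [] \<and> c = 0 then a_word i else label (h, c))"
proof (cases "c = 0")
  case True
  then show ?thesis
    using assms reg_move_1_pow_descent[OF assms] label_push_inv_letter[OF assms(2)]
    by (auto simp: reduce_word_def label_def)
next
  case False
  then show ?thesis
    using snd_reg_move_1_pow[of i "(h, c + int i)"] by (simp add: label_def)
qed

lemma label_in_Fbar: "label r \<in> Fbar"
  using a_word_in_Fbar subgroup.one_closed[OF subgroup_Fbar] by (auto simp: F2_one label_def)

lemma label_in_carrier: "label r \<in> carrier F2"
  using label_in_Fbar Fbar_subset_carrier by blast

definition states :: "state set" where
  "states = {(C, h, c). C \<subseteq> carrier F2 \<and> reduced_word h}"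

lemma y_move_states:
  assumes "s \<in> states"
  shows "y_move j s \<in> states"
proof -
  obtain C h c where s: "s = (C, h, c)" "C \<subseteq> carrier F2" "reduced_word h"
    using assms by (auto simp: states_def)
  have "label (h, c) <#\<^bsub>F2\<^esub> C \<subseteq> carrier F2"
    using s(2) label_in_carrier by (rule F2.l_coset_subset_G)
  then show ?thesis
    using s by (simp add: states_def)
qed

lemma y_move_inv_y_move:
  assumes "s \<in> states"
  shows "y_move_inv j (y_move j s) = s" and "y_move j (y_move_inv j s) = s"
proof -
  obtain C h c where s: "s = (C, h, c)" "C \<subseteq> carrier F2" "reduced_word h"
    using assms by (auto simp: states_def)
  have "inv\<^bsub>F2\<^esub> label (h, c) <#\<^bsub>F2\<^esub> (label (h, c) <#\<^bsub>F2\<^esub> C) = C"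
    "label (h, c) <#\<^bsub>F2\<^esub> (inv\<^bsub>F2\<^esub> label (h, c) <#\<^bsub>F2\<^esub> C) = C"
    using s(2) label_in_carrier by (simp_all add: F2.lcos_m_assoc F2.lcos_mult_one)
  then show "y_move_inv j (y_move j s) = s" and "y_move j (y_move_inv j s) = s"
    using s by (simp_all add: reg_move_inv_reg_move reg_move_reg_move_inv
      del: reg_move.simps reg_move_inv.simps)
qed

lemma y_move_pow: "j \<noteq> 2 \<Longrightarrow> (y_move j ^^ n) (C, r) = (C, (reg_move j ^^ n) r)"
  and y_move_inv_pow: "j \<noteq> 2 \<Longrightarrow> (y_move_inv j ^^ n) (C, r) = (C, (reg_move_inv j ^^ n) r)"
  by (induction n) (simp_all del: reg_move.simps reg_move_inv.simps)

lemma y_move_other: "j \<notin> {-1, 0, 1, 2} \<Longrightarrow> y_move j = id"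
  and y_move_inv_other: "j \<notin> {-1, 0, 1, 2} \<Longrightarrow> y_move_inv j = id"
  by (auto simp: fun_eq_iff)

lemma y_move_inv_pow_cancel: "s \<in> states \<Longrightarrow> (y_move_inv j ^^ n) ((y_move j ^^ n) s) = s"
  by (rule funpow_left_inverse_on[of states]) (simp_all add: y_move_states y_move_inv_y_move)

lemma y_move_pow_states: "s \<in> states \<Longrightarrow> (y_move j ^^ n) s \<in> states"
  by (induction n) (simp_all add: y_move_states)

lemma act_letter_y_pow:
  "(act_letter (GY, False) ^^ n) (s, j) = ((y_move j ^^ n) s, j)"
  "(act_letter (GY, True) ^^ n) (s, j) = ((y_move_inv j ^^ n) s, j)"
  by (induction n) simp_all

lemma word_action_a_letters_levels:
  "word_action act_letter (a_letters i) (s, j) =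
     ((y_move_inv (j - 1) ^^ i) ((y_move_inv j ^^ i) (y_move (j + 1)
        ((y_move j ^^ i) ((y_move (j - 1) ^^ i) (y_move_inv (j + 1) s))))), j)"
  by (simp add: a_letters_def a_conjugator_def inv_letter_def act_letter_y_pow
      del: y_move.simps y_move_inv.simps)

(* Counting the register up from (h, c) and back down again prepends t_i^-1 to h when c = 0. As
   the label only looks at the last letter of h, the two labels applied at level 2 cancel unless
   h = [] and c = 0, where the new label is a_i. *)
lemma a_letters_levels_at_1:
  assumes "(C, h, c) \<in> states"
  shows "(y_move_inv 0 ^^ i) ((y_move_inv 1 ^^ i) (y_move 2
        ((y_move 1 ^^ i) ((y_move 0 ^^ i) (y_move_inv 2 (C, h, c)))))) =
      (if h = [] \<and> c = 0 then (a_word i <#\<^bsub>F2\<^esub> C, h, c) else (C, h, c))"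
proof (cases "i = 0")
  case True
  then show ?thesis
    using y_move_inv_y_move(2)[OF assms, of 2] assms
    by (auto simp: a_word_0 states_def F2.lcos_mult_one[simplified F2_one]
        simp del: y_move.simps y_move_inv.simps)
next
  case False
  then have i: "i \<ge> 1"
    by simp
  have C: "C \<subseteq> carrier F2" and h: "reduced_word h"
    using assms by (simp_all add: states_def)
  define R where "R = (reg_move 1 ^^ i) (h, c + int i)"
  have "(y_move_inv 0 ^^ i) ((y_move_inv 1 ^^ i) (y_move 2
        ((y_move 1 ^^ i) ((y_move 0 ^^ i) (y_move_inv 2 (C, h, c)))))) =
      (label R <#\<^bsub>F2\<^esub> (inv\<^bsub>F2\<^esub> label (h, c) <#\<^bsub>F2\<^esub> C), h, c)"
    using h by (simp add: y_move_pow y_move_inv_pow reg_move_counter_pow R_def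
        reg_move_inv_1_pow_cancel del: reg_move.simps reg_move_inv.simps)
  also have "\<dots> = ((label R \<otimes>\<^bsub>F2\<^esub> inv\<^bsub>F2\<^esub> label (h, c)) <#\<^bsub>F2\<^esub> C, h, c)"
    using C label_in_carrier by (simp add: F2.lcos_m_assoc)
  also have "\<dots> = (if h = [] \<and> c = 0 then (a_word i <#\<^bsub>F2\<^esub> C, h, c) else (C, h, c))"
  proof (cases "h = [] \<and> c = 0")
    case True
    then have "label R = a_word i" and "label (h, c) = \<one>\<^bsub>F2\<^esub>"
      using label_descent[OF i h, of c] by (simp_all add: R_def label_def F2_one)
    moreover have "a_word i \<in> carrier F2"
      using a_word_in_Fbar Fbar_subset_carrier by blast
    ultimately show ?thesis
      using True by simp
  next
    case False
    then have "label R = label (h, c)"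
      using label_descent[OF i h, of c] by (auto simp: R_def)
    then show ?thesis
      using False C label_in_carrier by (auto simp: F2.lcos_mult_one)
  qed
  finally show ?thesis .
qed

lemma word_action_a_letters:
  assumes "(C, h, c) \<in> states"
  shows "word_action act_letter (a_letters i) ((C, h, c), j) =
    (if j = 1 \<and> h = [] \<and> c = 0 then ((a_word i <#\<^bsub>F2\<^esub> C, h, c), j) else ((C, h, c), j))"
proof -
  have h: "reduced_word h"
    using assms by (simp add: states_def)
  consider "j = 1" | "j \<in> {2, 3}" | "j \<in> {-2, -1, 0}" | "j \<notin> {-2, -1, 0, 1, 2, 3}"
    by fastforce
  then show ?thesis
  proof cases
    case 1
    then show ?thesis
      using a_letters_levels_at_1[OF assms] by (simp add: word_action_a_letters_levels)
  next
    case 2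
    then have "y_move (j + 1) = id" "y_move_inv (j + 1) = id"
      by (auto simp: y_move_other y_move_inv_other)
    then show ?thesis
      using 2 assms by (auto simp: word_action_a_letters_levels y_move_inv_pow_cancel y_move_pow_states)
  next
    case 3
    then show ?thesis
      using h by (auto simp: word_action_a_letters_levels y_move_pow y_move_inv_pow
          reg_move_counter_pow reg_move_other reg_move_inv_other reduce_word_reduced)
  next
    case 4
    then show ?thesis
      by (simp add: word_action_a_letters_levels y_move_other y_move_inv_other)
  qed
qed

section \<open>The action on left cosets of a subgroup of Fbar\<close>

definition points :: "letter list set \<Rightarrow> point set" where
  "points K = {((C, h, c), j). C \<in> (\<lambda>g. g <#\<^bsub>F2\<^esub> K) ` Fbar \<and> reduced_word h}"

definition Fbar_action :: "letter list \<Rightarrow> point \<Rightarrow> point" where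
  "Fbar_action f p = (case p of ((C, h, c), j) \<Rightarrow>
     if j = 1 \<and> h = [] \<and> c = 0 then ((f <#\<^bsub>F2\<^esub> C, h, c), j) else p)"

lemma pointsE:
  assumes "p \<in> points K"
  obtains g h c j where "p = ((g <#\<^bsub>F2\<^esub> K, h, c), j)" "g \<in> Fbar" "reduced_word h"
  using assms by (auto simp: points_def)

locale Fbar_coset_action =
  fixes K :: "letter list set"
  assumes subgroup_K: "subgroup K F2"
begin

lemma K_subset_carrier: "K \<subseteq> carrier F2"
  using subgroup.subset[OF subgroup_K] .

lemma points_states: "((C, h, c), j) \<in> points K \<Longrightarrow> (C, h, c) \<in> states"
  unfolding points_def states_def
  using F2.l_coset_subset_G[OF K_subset_carrier] Fbar_subset_carrier by blast

lemma coset_mult: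
  "f \<in> carrier F2 \<Longrightarrow> g \<in> carrier F2 \<Longrightarrow> f <#\<^bsub>F2\<^esub> (g <#\<^bsub>F2\<^esub> K) = (f \<otimes>\<^bsub>F2\<^esub> g) <#\<^bsub>F2\<^esub> K"
  by (rule F2.lcos_m_assoc[OF K_subset_carrier])

lemma Fbar_action_points:
  assumes "f \<in> Fbar" "p \<in> points K"
  shows "Fbar_action f p \<in> points K"
proof -
  obtain g h c j where p: "p = ((g <#\<^bsub>F2\<^esub> K, h, c), j)" "g \<in> Fbar" "reduced_word h"
    using assms(2) by (rule pointsE)
  have "f \<otimes>\<^bsub>F2\<^esub> g \<in> Fbar"
    using assms(1) p(2) by (rule subgroup.m_closed[OF subgroup_Fbar])
  moreover have "f \<in> carrier F2" "g \<in> carrier F2"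
    using assms(1) p(2) Fbar_subset_carrier by blast+
  ultimately show ?thesis
    using p by (auto simp: points_def Fbar_action_def coset_mult)
qed

lemma Fbar_action_mult:
  assumes "f \<in> carrier F2" "g \<in> carrier F2" "p \<in> points K"
  shows "Fbar_action f (Fbar_action g p) = Fbar_action (f \<otimes>\<^bsub>F2\<^esub> g) p"
proof -
  obtain k h c j where p: "p = ((k <#\<^bsub>F2\<^esub> K, h, c), j)" "k \<in> Fbar"
    using assms(3) by (rule pointsE)
  then show ?thesis
    using assms(1,2) Fbar_subset_carrier
    by (auto simp: Fbar_action_def coset_mult F2.m_assoc)
qed

lemma Fbar_action_one:
  assumes "p \<in> points K"
  shows "Fbar_action \<one>\<^bsub>F2\<^esub> p = p"
proof -
  obtain g h c j where p: "p = ((g <#\<^bsub>F2\<^esub> K, h, c), j)" "g \<in> Fbar"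
    using assms by (rule pointsE)
  then have "g \<in> carrier F2"
    using Fbar_subset_carrier by blast
  then show ?thesis
    using p by (simp add: Fbar_action_def coset_mult)
qed

end

sublocale Fbar_coset_action \<subseteq> F2_action act_letter "points K"
proof
  fix p a
  assume p: "p \<in> points K"
  then obtain g h c j where pe: "p = ((g <#\<^bsub>F2\<^esub> K, h, c), j)" "g \<in> Fbar" "reduced_word h"
    by (rule pointsE)
  have "label (h, c) \<otimes>\<^bsub>F2\<^esub> g \<in> Fbar" "inv\<^bsub>F2\<^esub> label (h, c) \<otimes>\<^bsub>F2\<^esub> g \<in> Fbar"
    using pe(2) label_in_Fbar subgroup.m_closed[OF subgroup_Fbar] subgroup.m_inv_closed[OF subgroup_Fbar]
    by blast+
  then show "act_letter a p \<in> points K"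
    using pe label_in_carrier Fbar_subset_carrier
    by (cases "(a, p)" rule: act_letter.cases)
      (auto simp: points_def coset_mult)
  show "act_letter (inv_letter a) (act_letter a p) = p"
    using y_move_inv_y_move[OF points_states] p pe(1)
    by (cases "(a, p)" rule: act_letter.cases)
      (auto simp: inv_letter_def simp del: y_move.simps y_move_inv.simps)
qed

context Fbar_coset_action
begin

lemma word_action_a_word:
  assumes "p \<in> points K"
  shows "word_action act_letter (a_word i) p = Fbar_action (a_word i) p"
proof -
  obtain g h c j where p: "p = ((g <#\<^bsub>F2\<^esub> K, h, c), j)"
    using assms by (rule pointsE)
  then show ?thesis
    using assms word_action_a_letters[OF points_states]
    by (simp add: a_word_eq_reduce_word word_action_reduce_word Fbar_action_def
        del: y_move.simps y_move_inv.simps)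
qed

lemma word_action_Fbar:
  assumes "f \<in> Fbar" and "p \<in> points K"
  shows "word_action act_letter f p = Fbar_action f p"
proof -
  let ?H = "{f \<in> Fbar. \<forall>p \<in> points K. word_action act_letter f p = Fbar_action f p}"
  have "subgroup ?H F2"
  proof (rule F2.subgroupI)
    show "?H \<subseteq> carrier F2"
      using Fbar_subset_carrier by blast
    show "?H \<noteq> {}"
      using subgroup.one_closed[OF subgroup_Fbar] Fbar_action_one by (auto simp: F2_one)
  next
    fix f g
    assume f: "f \<in> ?H" and g: "g \<in> ?H"
    then have "f \<in> carrier F2" "g \<in> carrier F2"
      using Fbar_subset_carrier by auto
    then show "f \<otimes>\<^bsub>F2\<^esub> g \<in> ?H"
      using f g subgroup.m_closed[OF subgroup_Fbar]
      by (auto simp: word_action_mult Fbar_action_points Fbar_action_mult)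
  next
    fix f
    assume f: "f \<in> ?H"
    have "word_action act_letter (inv\<^bsub>F2\<^esub> f) p = Fbar_action (inv\<^bsub>F2\<^esub> f) p" if p: "p \<in> points K" for p
    proof -
      have fc: "f \<in> carrier F2" and fi: "inv\<^bsub>F2\<^esub> f \<in> Fbar"
        using f Fbar_subset_carrier subgroup.m_inv_closed[OF subgroup_Fbar] by auto
      define q where "q = Fbar_action (inv\<^bsub>F2\<^esub> f) p"
      have q: "q \<in> points K"
        unfolding q_def using fi p by (rule Fbar_action_points)
      have "word_action act_letter f q = p"
        using f q fc p by (simp add: q_def Fbar_action_mult Fbar_action_one)
      then show ?thesis
        using word_action_F2_inv[OF fc q] q_def by simp
    qed
    then show "inv\<^bsub>F2\<^esub> f \<in> ?H"
      using f subgroup.m_inv_closed[OF subgroup_Fbar] by auto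
  qed
  moreover have "{a_word i | i. i \<ge> 1} \<subseteq> ?H"
    using a_word_in_Fbar word_action_a_word by auto
  ultimately have "Fbar \<subseteq> ?H"
    unfolding Fbar_def by (rule F2.generate_subgroup_incl[rotated])
  then show ?thesis
    using assms by blast
qed

lemma word_action_fixes_if_conjugates_in_K:
  assumes "n \<in> Fbar" and "\<And>g. g \<in> Fbar \<Longrightarrow> conjg F2 n g \<in> K" and "p \<in> points K"
  shows "word_action act_letter n p = p"
proof -
  obtain g h c j where p: "p = ((g <#\<^bsub>F2\<^esub> K, h, c), j)" "g \<in> Fbar"
    using assms(3) by (rule pointsE)
  have g: "g \<in> carrier F2" and n: "n \<in> carrier F2"
    using p(2) assms(1) Fbar_subset_carrier by blast+
  have conj: "conjg F2 n g \<in> K"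
    using assms(2) p(2) .
  have "n <#\<^bsub>F2\<^esub> (g <#\<^bsub>F2\<^esub> K) = (g \<otimes>\<^bsub>F2\<^esub> conjg F2 n g) <#\<^bsub>F2\<^esub> K"
    using g n by (simp add: coset_mult conjg_def F2.m_assoc[symmetric])
  also have "\<dots> = g <#\<^bsub>F2\<^esub> (conjg F2 n g <#\<^bsub>F2\<^esub> K)"
    using g conj K_subset_carrier by (simp add: coset_mult subsetD)
  also have "conjg F2 n g <#\<^bsub>F2\<^esub> K = K"
    using conj K_subset_carrier subgroup_K by (intro F2.coset_join3) auto
  finally show ?thesis
    using assms(1,3) p(1) by (simp add: word_action_Fbar Fbar_action_def)
qed

lemma Fbar_inter_action_kernel_subset: "Fbar \<inter> action_kernel \<subseteq> K"
proof
  fix z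
  assume z: "z \<in> Fbar \<inter> action_kernel"
  define p where "p = ((K, [] :: (nat \<times> bool) list, 0 :: int), 1 :: int)"
  have "\<one>\<^bsub>F2\<^esub> <#\<^bsub>F2\<^esub> K = K"
    using F2.lcos_mult_one[OF K_subset_carrier] .
  then have p: "p \<in> points K"
    using subgroup.one_closed[OF subgroup_Fbar] by (force simp: p_def points_def)
  then have "z <#\<^bsub>F2\<^esub> K = K"
    using z word_action_Fbar[of z p] by (simp add: action_kernel_def p_def Fbar_action_def)
  moreover have "z \<in> z <#\<^bsub>F2\<^esub> K"
    using subgroup.one_closed[OF subgroup_K] z Fbar_subset_carrier
    unfolding l_coset_def by force
  ultimately show "z \<in> K"
    by simp
qed

end

theorem lemma3p1:
  assumes "subgroup N (F2\<lparr>carrier := Fbar\<rparr>)"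
  shows "Fbar \<inter> normal_closure F2 N = normal_closure (F2\<lparr>carrier := Fbar\<rparr>) N"
proof -
  define K where "K = normal_closure (F2\<lparr>carrier := Fbar\<rparr>) N"
  have N: "N \<subseteq> Fbar"
    using subgroup.subset[OF assms] by simp
  interpret Fbar_coset_action K
    unfolding K_def using F2.subgroup_normal_closure_in_subgroup[OF subgroup_Fbar N]
    by (rule Fbar_coset_action.intro)
  have "word_action act_letter n p = p" if "n \<in> N" and "p \<in> points K" for n p
    using that N F2.conjg_in_normal_closure_in_subgroup[OF subgroup_Fbar N]
    by (intro word_action_fixes_if_conjugates_in_K) (auto simp: K_def)
  then have "Fbar \<inter> normal_closure F2 N \<subseteq> K"
    using normal_closure_subset_action_kernel Fbar_inter_action_kernel_subset by blast
  then show ?thesis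
    using F2.normal_closure_in_subgroup_subset[OF subgroup_Fbar N] K_def by blast
qed

end
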